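(* Let $\Sigma_A=\{\tau_{1,1},\dots,\tau_{1,a},\alpha_1,\dots,\alpha_p\}$ and $\Sigma_B=\{\tau_{2,1},\dots,\tau_{2,b},\beta_1,\dots,\beta_q\}$ be finite alphabets, and let $\mathcal{L}_A\subseteq\Sigma_A^*$ and $\mathcal{L}_B\subseteq\Sigma_B^*$ be regular languages. Then their Segre product $\mathcal{L}_A\boxtimes\mathcal{L}_B$ is a regular language.
   Context: The alphabets are disjoint and each is partitioned into the "$\tau$-letters" ($\tau_{1,1},\dots,\tau_{1,a}$, resp. $\tau_{2,1},\dots,\tau_{2,b}$) and the remaining letters ($\alpha_1,\dots,\alpha_p$, resp. $\beta_1,\dots,\beta_q$). Every word in $\Sigma_A^*$ can be uniquely written as $u_1\alpha_{i_1}u_2\alpha_{i_2}\cdots u_d\alpha_{i_d}u_{d+1}$ with $d\ge 0$, $i_1,\dots,i_d\in[p]$, and each $u_k$ a (possibly empty) word in the letters $\tau_{1,1},\dots,\tau_{1,a}$; similarly every word in $\Sigma_B^*$ is uniquely $v_1\beta_{j_1}\cdots v_d\beta_{j_d}v_{d+1}$ with the $v_k$ words in $\tau_{2,1},\dots,\tau_{2,b}$. The Segre product $\mathcal{L}_A\boxtimes\mathcal{L}_B$ is the language on the alphabet $\{\tau_{1,1},\dots,\tau_{1,a},\tau_{2,1},\dots,\tau_{2,b}\}\cup\{\gamma_{i,j}: i\in[p], j\in[q]\}$ (with $pq+a+b$ letters) consisting of all words $u_1v_1\gamma_{i_1,j_1}u_2v_2\gamma_{i_2,j_2}\cdots u_dv_d\gamma_{i_d,j_d}u_{d+1}v_{d+1}$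 such that $u_1\alpha_{i_1}u_2\alpha_{i_2}\cdots u_d\alpha_{i_d}u_{d+1}\in\mathcal{L}_A$ and $v_1\beta_{j_1}v_2\beta_{j_2}\cdots v_d\beta_{j_d}v_{d+1}\in\mathcal{L}_B$ (with the same $d$). Regular languages are those in the smallest class containing the languages consisting of a single letter or of the empty word, closed under union, concatenation and Kleene star (equivalently, those recognized by a finite automaton). *)

theory Defs
  imports Main
begin

definition lang_concat :: "'a list set \<Rightarrow> 'a list set \<Rightarrow> 'a list set" where
  "lang_concat A B = {xs @ ys | xs ys. xs \<in> A \<and> ys \<in> B}"

definition lang_star :: "'a list set \<Rightarrow> 'a list set" where
  "lang_star A = {concat ws | ws. set ws \<subseteq> A}"

inductive regular :: "'a list set \<Rightarrow> bool" where
  reg_empty: "regular {}"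
| reg_eps: "regular {[]}"
| reg_letter: "regular {[c]}"
| reg_union: "regular A \<Longrightarrow> regular B \<Longrightarrow> regular (A \<union> B)"
| reg_concat: "regular A \<Longrightarrow> regular B \<Longrightarrow> regular (lang_concat A B)"
| reg_star: "regular A \<Longrightarrow> regular (lang_star A)"

text \<open>Letters of the Segre product alphabet: tau-letters of A, tau-letters of B,
  and gamma letters gamma_{i,j} indexed by pairs (alpha_i, beta_j).\<close>

datatype ('x, 'y) segre_letter = TauA 'x | TauB 'y | Gamma 'x 'y

text \<open>The word u_1 alpha_{i_1} ... u_d alpha_{i_d} u_{d+1}, given the list of pairs
  (u_k, alpha_{i_k}) for k = 1..d and the final block u_{d+1}.\<close>

definition weave :: "('x list \<times> 'x) list \<Rightarrow> 'x list \<Rightarrow> 'x list" where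
  "weave ps u = concat (map (\<lambda>(uk, x). uk @ [x]) ps) @ u"

definition segre_word ::
  "('x list \<times> 'x) list \<Rightarrow> 'x list \<Rightarrow> ('y list \<times> 'y) list \<Rightarrow> 'y list \<Rightarrow> ('x, 'y) segre_letter list" where
  "segre_word ps u qs v =
     concat (map (\<lambda>((uk, x), (vk, y)). map TauA uk @ map TauB vk @ [Gamma x y]) (zip ps qs))
     @ map TauA u @ map TauB v"

text \<open>Segre product of L_A (alphabet TA \<union> AA, tau-letters TA) and L_B (alphabet TB \<union> BB,
  tau-letters TB).\<close>

definition segre_product ::
  "'x set \<Rightarrow> 'x set \<Rightarrow> 'x list set \<Rightarrow> 'y set \<Rightarrow> 'y set \<Rightarrow> 'y list set \<Rightarrow> ('x, 'y) segre_letter list set" where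
  "segre_product TA AA LA TB BB LB =
     {segre_word ps u qs v | ps u qs v.
        length ps = length qs
      \<and> (\<forall>(uk, x) \<in> set ps. set uk \<subseteq> TA \<and> x \<in> AA) \<and> set u \<subseteq> TA
      \<and> (\<forall>(vk, y) \<in> set qs. set vk \<subseteq> TB \<and> y \<in> BB) \<and> set v \<subseteq> TB
      \<and> weave ps u \<in> LA \<and> weave qs v \<in> LB}"

end

theory Submission
  imports Defs
begin

text \<open>Over a finite alphabet a language is regular iff it has only finitely many left quotients
  (Brzozowski derivatives): derivatives of unions, concatenations and stars are built from finitely
  many derivatives of the parts, and conversely the derivatives form a finite deterministic
  automaton, whose language is regular by Kleene's construction. A word over the product alphabet
  lies in the Segre product iff between consecutive \<open>\<gamma>\<close>-letters all \<open>\<tau>\<^sub>1\<close>-letters precede all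
  \<open>\<tau>\<^sub>2\<close>-letters and its two projections (\<open>\<gamma>\<^sub>i\<^sub>j \<mapsto> \<alpha>\<^sub>i\<close>, resp. \<open>\<beta>\<^sub>j\<close>, erasing the
  other \<open>\<tau>\<close>-letters) lie in \<open>L\<^sub>A\<close> and \<open>L\<^sub>B\<close>. Derivatives commute with intersections and with
  inverse images under monoid homomorphisms, and the ordering condition has only three derivatives,
  so the Segre product has finitely many derivatives.\<close>

section \<open>Left quotients\<close>

definition Derivs :: "'a list \<Rightarrow> 'a list set \<Rightarrow> 'a list set" where
  "Derivs w L = {v. w @ v \<in> L}"

lemma Derivs_Nil [simp]: "Derivs [] L = L"
  by (simp add: Derivs_def)

lemma Derivs_append: "Derivs (u @ v) L = Derivs v (Derivs u L)"
  by (simp add: Derivs_def)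

lemma Derivs_Un: "Derivs w (A \<union> B) = Derivs w A \<union> Derivs w B"
  by (auto simp: Derivs_def)

lemma Derivs_Int: "Derivs w (A \<inter> B) = Derivs w A \<inter> Derivs w B"
  by (auto simp: Derivs_def)

lemma finite_range_pair:
  "finite (range f) \<Longrightarrow> finite (range g) \<Longrightarrow> finite (range (\<lambda>x. h (f x) (g x)))"
proof -
  assume "finite (range f)" "finite (range g)"
  then have "finite (range (\<lambda>x. (f x, g x)))"
    by (rule finite_subset[rotated, OF finite_cartesian_product]) auto
  from finite_range_imageI[OF this, of "case_prod h"] show ?thesis
    by simp
qed

lemma finite_range_Derivs_Int:
  "finite (range (\<lambda>w. Derivs w A)) \<Longrightarrow> finite (range (\<lambda>w. Derivs w B)) \<Longrightarrow>
   finite (range (\<lambda>w. Derivs w (A \<inter> B)))"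
  unfolding Derivs_Int by (rule finite_range_pair)

lemma Derivs_vimage_hom:
  assumes "\<And>u v. h (u @ v) = h u @ h v"
  shows "Derivs w (h -` L) = h -` Derivs (h w) L"
  using assms by (auto simp: Derivs_def)

lemma finite_range_Derivs_vimage_hom:
  assumes "\<And>u v. h (u @ v) = h u @ h v" and "finite (range (\<lambda>w. Derivs w L))"
  shows "finite (range (\<lambda>w. Derivs w (h -` L)))"
proof -
  have "finite (range (\<lambda>w. Derivs (h w) L))"
    by (rule finite_subset[OF _ assms(2)]) auto
  from finite_range_imageI[OF this, of "vimage h"] show ?thesis
    by (simp add: Derivs_vimage_hom[OF assms(1)])
qed

lemma finite_range_Derivs_lists: "finite (range (\<lambda>w. Derivs w (lists \<Sigma>)))"
proof -
  have "range (\<lambda>w. Derivs w (lists \<Sigma>)) \<subseteq> {lists \<Sigma>, {}}"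
    by (auto simp: Derivs_def)
  then show ?thesis
    by (rule finite_subset) simp
qed

section \<open>Regular languages have finitely many derivatives\<close>

lemma Nil_in_lang_star: "[] \<in> lang_star A"
  unfolding lang_star_def by (auto intro!: exI[of _ "[]"])

lemma in_lang_star: "u \<in> A \<Longrightarrow> u \<in> lang_star A"
  unfolding lang_star_def by (auto intro!: exI[of _ "[u]"])

lemma append_in_lang_star: "u \<in> lang_star A \<Longrightarrow> v \<in> lang_star A \<Longrightarrow> u @ v \<in> lang_star A"
  unfolding lang_star_def by (auto, metis concat_append le_sup_iff set_append)

lemma concat_in_lang_star: "set ws \<subseteq> A \<Longrightarrow> concat ws \<in> lang_star A"
  unfolding lang_star_def by auto

lemma lang_star_split:
  "w @ x = concat ws \<Longrightarrow> set ws \<subseteq> A \<Longrightarrow> w \<noteq> [] \<Longrightarrow>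
   \<exists>u v y z. w = u @ v \<and> u \<in> lang_star A \<and> v \<noteq> [] \<and> v @ y \<in> A \<and> x = y @ z \<and> z \<in> lang_star A"
proof (induction ws arbitrary: w)
  case Nil
  then show ?case by simp
next
  case (Cons a ws)
  have rest: "concat ws \<in> lang_star A"
    using Cons.prems(2) by (simp add: concat_in_lang_star)
  from Cons.prems(1) have "w @ x = a @ concat ws" by simp
  then obtain us where "(w = a @ us \<and> us @ x = concat ws) \<or> (w @ us = a \<and> x = us @ concat ws)"
    by (auto simp: append_eq_append_conv2)
  then show ?case
  proof (elim disjE conjE)
    assume w: "w = a @ us" and us: "us @ x = concat ws"
    show ?thesis
    proof (cases "us = []")
      case True
      then show ?thesis
        using w us Cons.prems rest
        by (intro exI[of _ "[]"] exI[of _ a] exI[of _ "[]"] exI[of _ "concat ws"])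
          (auto simp: Nil_in_lang_star)
    next
      case False
      from Cons.IH[OF us _ False] Cons.prems(2) obtain u v y z where
        "us = u @ v" "u \<in> lang_star A" "v \<noteq> []" "v @ y \<in> A" "x = y @ z" "z \<in> lang_star A"
        by auto
      then show ?thesis
        using w Cons.prems
        by (intro exI[of _ "a @ u"] exI[of _ v] exI[of _ y] exI[of _ z])
          (auto intro: append_in_lang_star in_lang_star)
    qed
  next
    assume "w @ us = a" "x = us @ concat ws"
    then show ?thesis
      using Cons.prems rest
      by (intro exI[of _ "[]"] exI[of _ w] exI[of _ us] exI[of _ "concat ws"])
        (auto simp: Nil_in_lang_star)
  qed
qed

lemma Derivs_lang_concat:
  "Derivs w (lang_concat A B) =
     lang_concat (Derivs w A) B \<union> \<Union> {Derivs v B | u v. w = u @ v \<and> u \<in> A}"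
  unfolding Derivs_def lang_concat_def
  by (auto simp: append_eq_append_conv2) blast+

lemma Derivs_lang_star:
  "Derivs w (lang_star A) = (if w = [] then lang_star A else {}) \<union>
     \<Union> {lang_concat (Derivs v A) (lang_star A) | u v. w = u @ v \<and> u \<in> lang_star A \<and> v \<noteq> []}"
  (is "?L = ?R")
proof
  show "?L \<subseteq> ?R"
  proof
    fix x assume "x \<in> ?L"
    then obtain ws where ws: "w @ x = concat ws" "set ws \<subseteq> A"
      unfolding Derivs_def lang_star_def by auto
    show "x \<in> ?R"
    proof (cases "w = []")
      case True
      then show ?thesis using \<open>x \<in> ?L\<close> by simp
    next
      case False
      from lang_star_split[OF ws False] show ?thesis
        unfolding lang_concat_def Derivs_def by blast
    qed
  qed
next
  show "?R \<subseteq> ?L"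
  proof
    fix x assume "x \<in> ?R"
    then consider "w = []" "x \<in> lang_star A"
      | u v y z where "w = u @ v" "u \<in> lang_star A" "v @ y \<in> A" "x = y @ z" "z \<in> lang_star A"
      unfolding lang_concat_def Derivs_def by (auto split: if_splits)
    then show "x \<in> ?L"
    proof cases
      case 1
      then show ?thesis by simp
    next
      case 2
      then have "u @ ((v @ y) @ z) \<in> lang_star A"
        by (blast intro: append_in_lang_star in_lang_star)
      then show ?thesis
        using 2 by (simp add: Derivs_def)
    qed
  qed
qed

lemma finite_range_Derivs_if_regular: "regular L \<Longrightarrow> finite (range (\<lambda>w. Derivs w L))"
proof (induction rule: regular.induct)
  case reg_empty
  show ?case by (simp add: Derivs_def)
next
  case reg_eps
  have "range (\<lambda>w. Derivs w {[]}) \<subseteq> {{[]}, {}}"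
    by (auto simp: Derivs_def)
  then show ?case by (rule finite_subset) simp
next
  case (reg_letter c)
  have "range (\<lambda>w. Derivs w {[c]}) \<subseteq> {{[c]}, {[]}, {}}"
    by (auto simp: Derivs_def append_eq_Cons_conv)
  then show ?case by (rule finite_subset) simp
next
  case (reg_union A B)
  show ?case
    unfolding Derivs_Un using reg_union.IH by (rule finite_range_pair)
next
  case (reg_concat A B)
  let ?tail = "\<lambda>w. {Derivs v B | u v. w = u @ v \<and> u \<in> A}"
  have "finite (range (\<lambda>w. (Derivs w A, ?tail w)))"
    by (rule finite_subset[of _ "range (\<lambda>w. Derivs w A) \<times> Pow (range (\<lambda>w. Derivs w B))"])
      (use reg_concat.IH in auto)
  from finite_range_imageI[OF this, of "\<lambda>(X, S). lang_concat X B \<union> \<Union> S"] show ?case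
    unfolding Derivs_lang_concat by (simp only: case_prod_conv)
next
  case (reg_star A)
  let ?tail = "\<lambda>w. {lang_concat (Derivs v A) (lang_star A) | u v. w = u @ v \<and> u \<in> lang_star A \<and> v \<noteq> []}"
  have "range (\<lambda>w. (w = [], ?tail w)) \<subseteq>
      UNIV \<times> Pow ((\<lambda>X. lang_concat X (lang_star A)) ` range (\<lambda>w. Derivs w A))"
    by blast
  then have "finite (range (\<lambda>w. (w = [], ?tail w)))"
    by (rule finite_subset) (use reg_star.IH in simp)
  from finite_range_imageI[OF this, of "\<lambda>(b, S). (if b then lang_star A else {}) \<union> \<Union> S"]
  show ?case
    unfolding Derivs_lang_star by (simp only: case_prod_conv)
qed

section \<open>Finite automata accept regular languages\<close>

lemma regular_UN:
  assumes "finite I" "\<And>i. i \<in> I \<Longrightarrow> regular (f i)"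
  shows "regular (\<Union>i\<in>I. f i)"
  using assms by (induction I rule: finite_induct) (auto intro: regular.intros)

lemma lang_concat_star_unfold_subset:
  "B \<union> lang_concat A (lang_concat (lang_star A) B) \<subseteq> lang_concat (lang_star A) B"
proof
  fix w assume "w \<in> B \<union> lang_concat A (lang_concat (lang_star A) B)"
  then consider "w \<in> B"
    | u x y where "w = (u @ x) @ y" "u \<in> A" "x \<in> lang_star A" "y \<in> B"
    unfolding lang_concat_def by auto
  then show "w \<in> lang_concat (lang_star A) B"
  proof cases
    case 1
    then show ?thesis
      unfolding lang_concat_def using Nil_in_lang_star by fastforce
  next
    case 2
    then show ?thesis
      unfolding lang_concat_def by (blast intro: append_in_lang_star in_lang_star)
  qed
qed

fun inner_states :: "('s \<Rightarrow> 'a \<Rightarrow> 's) \<Rightarrow> 's \<Rightarrow> 'a list \<Rightarrow> 's set" where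
  "inner_states \<delta> p [] = {}"
| "inner_states \<delta> p (a # w) = (if w = [] then {} else insert (\<delta> p a) (inner_states \<delta> (\<delta> p a) w))"

text \<open>Kleene's language \<open>R\<^sup>S\<^sub>p\<^sub>q\<close>: paths from \<open>p\<close> to \<open>q\<close> all of whose intermediate states lie in \<open>S\<close>.\<close>

definition path_lang :: "'a set \<Rightarrow> ('s \<Rightarrow> 'a \<Rightarrow> 's) \<Rightarrow> 's \<Rightarrow> 's \<Rightarrow> 's set \<Rightarrow> 'a list set" where
  "path_lang \<Sigma> \<delta> p q S = {w \<in> lists \<Sigma>. foldl \<delta> p w = q \<and> inner_states \<delta> p w \<subseteq> S}"

lemma inner_states_append:
  "u \<noteq> [] \<Longrightarrow> v \<noteq> [] \<Longrightarrow>
   inner_states \<delta> p (u @ v) = inner_states \<delta> p u \<union> {foldl \<delta> p u} \<union> inner_states \<delta> (foldl \<delta> p u) v"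
proof (induction u arbitrary: p)
  case Nil
  then show ?case by simp
next
  case (Cons a u)
  then show ?case
    by (cases "u = []") auto
qed

lemma inner_states_subset:
  assumes "w \<in> lists \<Sigma>" "p \<in> Q" "\<forall>q\<in>Q. \<forall>a\<in>\<Sigma>. \<delta> q a \<in> Q"
  shows "inner_states \<delta> p w \<subseteq> Q"
  using assms by (induction w arbitrary: p) auto

lemma path_lang_append:
  assumes "u \<in> path_lang \<Sigma> \<delta> p s S" "v \<in> path_lang \<Sigma> \<delta> s q S" "s \<in> S"
  shows "u @ v \<in> path_lang \<Sigma> \<delta> p q S"
proof (cases "u = [] \<or> v = []")
  case True
  then show ?thesis using assms by (auto simp: path_lang_def)
next
  case False
  then show ?thesis using assms by (auto simp: path_lang_def inner_states_append)
qed

lemma Nil_in_path_lang: "[] \<in> path_lang \<Sigma> \<delta> s s S"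
  by (simp add: path_lang_def)

lemma concat_in_path_lang:
  "set ws \<subseteq> path_lang \<Sigma> \<delta> s s S \<Longrightarrow> s \<in> S \<Longrightarrow> concat ws \<in> path_lang \<Sigma> \<delta> s s S"
  by (induction ws) (auto simp: Nil_in_path_lang intro: path_lang_append)

lemma path_lang_mono: "S \<subseteq> T \<Longrightarrow> path_lang \<Sigma> \<delta> p q S \<subseteq> path_lang \<Sigma> \<delta> p q T"
  by (auto simp: path_lang_def)

lemma path_lang_empty:
  "path_lang \<Sigma> \<delta> p q {} = (if p = q then {[]} else {}) \<union> (\<Union>a\<in>{a\<in>\<Sigma>. \<delta> p a = q}. {[a]})"
proof -
  have "w \<in> path_lang \<Sigma> \<delta> p q {} \<longleftrightarrow>
        w \<in> (if p = q then {[]} else {}) \<union> (\<Union>a\<in>{a\<in>\<Sigma>. \<delta> p a = q}. {[a]})" for w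
    by (cases w) (auto simp: path_lang_def)
  then show ?thesis by blast
qed

lemma path_lang_insert_subset:
  "w \<in> path_lang \<Sigma> \<delta> p q (insert s S) \<Longrightarrow>
   w \<in> path_lang \<Sigma> \<delta> p q S \<union>
        lang_concat (path_lang \<Sigma> \<delta> p s S) (lang_concat (lang_star (path_lang \<Sigma> \<delta> s s S)) (path_lang \<Sigma> \<delta> s q S))"
proof (induction w arbitrary: p)
  case Nil
  then show ?case by (simp add: path_lang_def)
next
  case (Cons a w)
  let ?P = "path_lang \<Sigma> \<delta>"
  let ?loops = "lang_concat (lang_star (?P s s S)) (?P s q S)"
  let ?p' = "\<delta> p a"
  show ?case
  proof (cases "w = []")
    case True
    then show ?thesis using Cons.prems by (auto simp: path_lang_def)
  next
    case False
    have w: "w \<in> ?P ?p' q (insert s S)" and p': "?p' \<in> insert s S" and a: "[a] \<in> ?P p ?p' S"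
      using Cons.prems False by (auto simp: path_lang_def)
    show ?thesis
    proof (cases "?p' = s")
      case True
      have "w \<in> ?loops"
        using Cons.IH[OF w] True lang_concat_star_unfold_subset[of "?P s q S" "?P s s S"] by auto
      then show ?thesis
        using a True unfolding lang_concat_def by (intro UnI2 CollectI exI[of _ "[a]"] exI[of _ w]) simp
    next
      case False
      with p' have "?p' \<in> S" by simp
      from Cons.IH[OF w] show ?thesis
      proof
        assume "w \<in> ?P ?p' q S"
        then show ?thesis using path_lang_append[OF a _ \<open>?p' \<in> S\<close>] by auto
      next
        assume "w \<in> lang_concat (?P ?p' s S) ?loops"
        then obtain w1 w2 where "w = w1 @ w2" "w1 \<in> ?P ?p' s S" "w2 \<in> ?loops"
          unfolding lang_concat_def by auto
        moreover have "[a] @ w1 \<in> ?P p s S"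
          using path_lang_append[OF a \<open>w1 \<in> _\<close> \<open>?p' \<in> S\<close>] .
        ultimately show ?thesis
          unfolding lang_concat_def by (intro UnI2 CollectI exI[of _ "a # w1"] exI[of _ w2]) simp
      qed
    qed
  qed
qed

lemma path_lang_insert:
  "path_lang \<Sigma> \<delta> p q (insert s S) =
   path_lang \<Sigma> \<delta> p q S \<union>
     lang_concat (path_lang \<Sigma> \<delta> p s S) (lang_concat (lang_star (path_lang \<Sigma> \<delta> s s S)) (path_lang \<Sigma> \<delta> s q S))"
  (is "?L = ?R")
proof
  show "?L \<subseteq> ?R"
    by (intro subsetI path_lang_insert_subset)
next
  let ?P = "\<lambda>p q. path_lang \<Sigma> \<delta> p q (insert s S)"
  have mono: "path_lang \<Sigma> \<delta> p' q' S \<subseteq> ?P p' q'" for p' q'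
    by (rule path_lang_mono) blast
  have "x @ concat ws @ y \<in> ?P p q"
    if "x \<in> ?P p s" "set ws \<subseteq> ?P s s" "y \<in> ?P s q" for x ws y
    using that by (blast intro: path_lang_append concat_in_path_lang)
  then show "?R \<subseteq> ?L"
    using mono unfolding lang_concat_def lang_star_def by blast
qed

lemma regular_path_lang:
  assumes "finite \<Sigma>" "finite S"
  shows "regular (path_lang \<Sigma> \<delta> p q S)"
  using assms(2)
proof (induction S arbitrary: p q rule: finite_induct)
  case empty
  show ?case
    unfolding path_lang_empty
    by (intro reg_union regular_UN) (use assms(1) in \<open>auto intro: regular.intros\<close>)
next
  case (insert s S)
  show ?case
    unfolding path_lang_insert by (intro reg_union reg_concat reg_star insert.IH)
qed

lemma regular_dfa_lang:
  assumes "finite \<Sigma>" "finite Q" "s \<in> Q" "\<forall>q\<in>Q. \<forall>a\<in>\<Sigma>. \<delta> q a \<in> Q"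
  shows "regular {w \<in> lists \<Sigma>. foldl \<delta> s w \<in> F}"
proof -
  have "foldl \<delta> s w \<in> Q" if "w \<in> lists \<Sigma>" for w
    using that assms(3) by (induction w arbitrary: s) (use assms(4) in auto)
  then have "{w \<in> lists \<Sigma>. foldl \<delta> s w \<in> F} = (\<Union>q\<in>Q \<inter> F. path_lang \<Sigma> \<delta> s q Q)"
    using inner_states_subset[OF _ assms(3,4)] by (auto simp: path_lang_def)
  also have "regular \<dots>"
    using assms(1,2) by (intro regular_UN regular_path_lang) auto
  finally show ?thesis .
qed

lemma foldl_Derivs: "foldl (\<lambda>X a. Derivs [a] X) L w = Derivs w L"
  by (induction w arbitrary: L) (auto simp: Derivs_def)

lemma regular_if_finite_range_Derivs:
  assumes "finite \<Sigma>" "L \<subseteq> lists \<Sigma>" "finite (range (\<lambda>w. Derivs w L))"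
  shows "regular L"
proof -
  have "L = {w \<in> lists \<Sigma>. foldl (\<lambda>X a. Derivs [a] X) L w \<in> {X. [] \<in> X}}"
    unfolding foldl_Derivs using assms(2) by (auto simp: Derivs_def)
  also have "regular \<dots>"
    using assms(1,3) by (rule regular_dfa_lang)
      (auto simp: Derivs_append[symmetric] intro: range_eqI[of _ _ "[]"])
  finally show ?thesis .
qed

section \<open>The Segre product\<close>

definition segre_alphabet :: "'x set \<Rightarrow> 'x set \<Rightarrow> 'y set \<Rightarrow> 'y set \<Rightarrow> ('x, 'y) segre_letter set" where
  "segre_alphabet TA AA TB BB = TauA ` TA \<union> TauB ` TB \<union> case_prod Gamma ` (AA \<times> BB)"

lemma segre_alphabet_iff [simp]:
  "TauA x \<in> segre_alphabet TA AA TB BB \<longleftrightarrow> x \<in> TA"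
  "TauB y \<in> segre_alphabet TA AA TB BB \<longleftrightarrow> y \<in> TB"
  "Gamma x y \<in> segre_alphabet TA AA TB BB \<longleftrightarrow> x \<in> AA \<and> y \<in> BB"
  by (auto simp: segre_alphabet_def)

lemma finite_segre_alphabet:
  "finite TA \<Longrightarrow> finite AA \<Longrightarrow> finite TB \<Longrightarrow> finite BB \<Longrightarrow> finite (segre_alphabet TA AA TB BB)"
  by (simp add: segre_alphabet_def)

fun letter_projA :: "('x, 'y) segre_letter \<Rightarrow> 'x list" where
  "letter_projA (TauA x) = [x]"
| "letter_projA (TauB y) = []"
| "letter_projA (Gamma x y) = [x]"

fun letter_projB :: "('x, 'y) segre_letter \<Rightarrow> 'y list" where
  "letter_projB (TauA x) = []"
| "letter_projB (TauB y) = [y]"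
| "letter_projB (Gamma x y) = [y]"

definition segre_projA :: "('x, 'y) segre_letter list \<Rightarrow> 'x list" where
  "segre_projA w = concat (map letter_projA w)"

definition segre_projB :: "('x, 'y) segre_letter list \<Rightarrow> 'y list" where
  "segre_projB w = concat (map letter_projB w)"

lemma segre_projA_append: "segre_projA (u @ v) = segre_projA u @ segre_projA v"
  by (simp add: segre_projA_def)

lemma segre_projB_append: "segre_projB (u @ v) = segre_projB u @ segre_projB v"
  by (simp add: segre_projB_def)

text \<open>The flag \<open>b\<close> records whether a \<open>TauB\<close> letter has been read since the last \<open>Gamma\<close>.\<close>

fun tau_sorted :: "bool \<Rightarrow> ('x, 'y) segre_letter list \<Rightarrow> bool" where
  "tau_sorted b [] = True"
| "tau_sorted b (TauA x # w) = (\<not> b \<and> tau_sorted False w)"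
| "tau_sorted b (TauB y # w) = tau_sorted True w"
| "tau_sorted b (Gamma x y # w) = tau_sorted False w"

fun tauB_seen :: "bool \<Rightarrow> ('x, 'y) segre_letter list \<Rightarrow> bool" where
  "tauB_seen b [] = b"
| "tauB_seen b (TauA x # w) = tauB_seen False w"
| "tauB_seen b (TauB y # w) = tauB_seen True w"
| "tauB_seen b (Gamma x y # w) = tauB_seen False w"

lemma tau_sorted_append:
  "tau_sorted b (u @ v) \<longleftrightarrow> tau_sorted b u \<and> tau_sorted (tauB_seen b u) v"
  by (induction b u rule: tau_sorted.induct) auto

lemma Derivs_tau_sorted:
  "Derivs w {v. tau_sorted b v} = (if tau_sorted b w then {v. tau_sorted (tauB_seen b w) v} else {})"
  by (auto simp: Derivs_def tau_sorted_append)

lemma finite_range_Derivs_tau_sorted: "finite (range (\<lambda>w. Derivs w {v. tau_sorted b v}))"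
proof -
  have "range (\<lambda>w. Derivs w {v. tau_sorted b v}) \<subseteq> insert {} (range (\<lambda>c. {v. tau_sorted c v}))"
    by (auto simp: Derivs_tau_sorted)
  then show ?thesis
    by (rule finite_subset) simp
qed

definition blocks_over :: "'x set \<Rightarrow> 'x set \<Rightarrow> ('x list \<times> 'x) list \<Rightarrow> 'x list \<Rightarrow> bool" where
  "blocks_over T X ps u \<longleftrightarrow> (\<forall>(uk, x) \<in> set ps. set uk \<subseteq> T \<and> x \<in> X) \<and> set u \<subseteq> T"

lemma blocks_over_simps [simp]:
  "blocks_over T X [] u \<longleftrightarrow> set u \<subseteq> T"
  "blocks_over T X ((uk, x) # ps) u \<longleftrightarrow> set uk \<subseteq> T \<and> x \<in> X \<and> blocks_over T X ps u"
  by (auto simp: blocks_over_def)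

lemma segre_product_eq_segre_words:
  "segre_product TA AA LA TB BB LB =
     {segre_word ps u qs v | ps u qs v. length ps = length qs \<and>
        blocks_over TA AA ps u \<and> blocks_over TB BB qs v \<and> weave ps u \<in> LA \<and> weave qs v \<in> LB}"
  unfolding segre_product_def blocks_over_def by blast

lemma segre_word_Nil [simp]: "segre_word [] u [] v = map TauA u @ map TauB v"
  by (simp add: segre_word_def)

lemma segre_word_Cons [simp]:
  "segre_word ((uk, x) # ps) u ((vk, y) # qs) v =
     map TauA uk @ map TauB vk @ Gamma x y # segre_word ps u qs v"
  by (simp add: segre_word_def)

lemma weave_Nil [simp]: "weave [] u = u"
  by (simp add: weave_def)

lemma weave_Cons [simp]: "weave ((uk, x) # ps) u = uk @ x # weave ps u"
  by (simp add: weave_def)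

lemma tau_sorted_map_TauA [simp]: "tau_sorted False (map TauA u)"
  by (induction u) auto

lemma tauB_seen_map_TauA [simp]: "tauB_seen False (map TauA u) = False"
  by (induction u) auto

lemma tau_sorted_map_TauB [simp]: "tau_sorted b (map TauB v)"
  by (induction v arbitrary: b) auto

lemma segre_word_properties:
  assumes "length ps = length qs"
  shows "segre_projA (segre_word ps u qs v) = weave ps u"
    and "segre_projB (segre_word ps u qs v) = weave qs v"
    and "tau_sorted False (segre_word ps u qs v)"
  using assms
  by (induction ps qs rule: list_induct2)
    (auto simp: segre_projA_def segre_projB_def tau_sorted_append comp_def)

lemma segre_word_in_lists:
  assumes "length ps = length qs" "blocks_over TA AA ps u" "blocks_over TB BB qs v"
  shows "segre_word ps u qs v \<in> lists (segre_alphabet TA AA TB BB)"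
  using assms by (induction ps qs rule: list_induct2) (auto simp: subset_iff)

lemma tau_sorted_True_map_TauA_append:
  "tau_sorted True (map TauA u @ w) \<longleftrightarrow> u = [] \<and> tau_sorted True w"
  by (cases u) auto

lemma TauA_Cons_segre_word:
  assumes "length ps = length qs" "blocks_over TA AA ps u" "x \<in> TA"
  obtains ps' u' where "length ps' = length qs" "blocks_over TA AA ps' u'"
    "TauA x # segre_word ps u qs v = segre_word ps' u' qs v"
proof (cases ps)
  case Nil
  with assms that[of "[]" "x # u"] show ?thesis by simp
next
  case (Cons p ps'')
  with assms obtain uk a q qs'' where "ps = (uk, a) # ps''" "qs = q # qs''"
    by (cases p, cases qs) auto
  with assms that[of "(x # uk, a) # ps''" u] show ?thesis by (cases q) auto
qed

lemma TauB_Cons_segre_word: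
  assumes "length ps = length qs" "blocks_over TB BB qs v" "y \<in> TB"
    and "tau_sorted True (segre_word ps u qs v)"
  obtains qs' v' where "length ps = length qs'" "blocks_over TB BB qs' v'"
    "TauB y # segre_word ps u qs v = segre_word ps u qs' v'"
proof (cases qs)
  case Nil
  with assms have "ps = []" "u = []"
    by (auto simp: tau_sorted_True_map_TauA_append)
  with Nil assms that[of "[]" "y # v"] show ?thesis by simp
next
  case (Cons q qs'')
  with assms obtain vk b p ps'' where "qs = (vk, b) # qs''" "ps = p # ps''"
    by (cases q, cases ps) auto
  moreover obtain uk a where "p = (uk, a)" by (cases p)
  moreover from calculation assms have "uk = []"
    by (simp add: tau_sorted_True_map_TauA_append)
  ultimately show ?thesis
    using assms that[of "(y # vk, b) # qs''" v] by auto
qed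

lemma segre_word_decomposition:
  assumes "w \<in> lists (segre_alphabet TA AA TB BB)" "tau_sorted b w"
  shows "\<exists>ps u qs v. length ps = length qs \<and> blocks_over TA AA ps u \<and> blocks_over TB BB qs v
           \<and> w = segre_word ps u qs v"
  using assms
proof (induction w arbitrary: b)
  case Nil
  show ?case by (intro exI[of _ "[]"]) simp
next
  case (Cons c w)
  show ?case
  proof (cases c)
    case (TauA x)
    with Cons have "x \<in> TA" "tau_sorted False w" by auto
    from Cons.IH[OF \<open>tau_sorted False w\<close>] obtain ps u qs v where
      "length ps = length qs" "blocks_over TA AA ps u" "blocks_over TB BB qs v" "w = segre_word ps u qs v"
      by blast
    with TauA \<open>x \<in> TA\<close> show ?thesis
      by (metis TauA_Cons_segre_word)
  next
    case (TauB y)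
    with Cons have "y \<in> TB" "tau_sorted True w" by auto
    from Cons.IH[OF \<open>tau_sorted True w\<close>] obtain ps u qs v where
      "length ps = length qs" "blocks_over TA AA ps u" "blocks_over TB BB qs v" "w = segre_word ps u qs v"
      by blast
    with TauB \<open>y \<in> TB\<close> \<open>tau_sorted True w\<close> show ?thesis
      by (metis TauB_Cons_segre_word)
  next
    case (Gamma x y)
    with Cons have "x \<in> AA" "y \<in> BB" "tau_sorted False w" by auto
    from Cons.IH[OF \<open>tau_sorted False w\<close>] obtain ps u qs v where
      "length ps = length qs" "blocks_over TA AA ps u" "blocks_over TB BB qs v" "w = segre_word ps u qs v"
      by blast
    with Gamma \<open>x \<in> AA\<close> \<open>y \<in> BB\<close> show ?thesis
      by (intro exI[of _ "([], x) # ps"] exI[of _ u] exI[of _ "([], y) # qs"] exI[of _ v]) auto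
  qed
qed

lemma segre_product_eq:
  "segre_product TA AA LA TB BB LB =
     lists (segre_alphabet TA AA TB BB) \<inter> {w. tau_sorted False w} \<inter> segre_projA -` LA \<inter> segre_projB -` LB"
  (is "?S = ?R")
proof
  show "?S \<subseteq> ?R"
  proof
    fix w assume "w \<in> ?S"
    then obtain ps u qs v where "length ps = length qs" "blocks_over TA AA ps u" "blocks_over TB BB qs v"
      "w = segre_word ps u qs v" "weave ps u \<in> LA" "weave qs v \<in> LB"
      unfolding segre_product_eq_segre_words by blast
    moreover from this have "w \<in> lists (segre_alphabet TA AA TB BB)"
      using segre_word_in_lists by blast
    ultimately show "w \<in> ?R"
      by (simp add: segre_word_properties)
  qed
next
  show "?R \<subseteq> ?S"
  proof
    fix w assume w: "w \<in> ?R"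
    then obtain ps u qs v where "length ps = length qs" "blocks_over TA AA ps u" "blocks_over TB BB qs v"
      "w = segre_word ps u qs v"
      using segre_word_decomposition by blast
    with w show "w \<in> ?S"
      unfolding segre_product_eq_segre_words by (auto simp: segre_word_properties)
  qed
qed

theorem theorem3p3:
  fixes TA AA :: "'x set" and TB BB :: "'y set"
    and LA :: "'x list set" and LB :: "'y list set"
  assumes "finite TA" and "finite AA" and "TA \<inter> AA = {}"
    and "finite TB" and "finite BB" and "TB \<inter> BB = {}"
    and "LA \<subseteq> lists (TA \<union> AA)" and "LB \<subseteq> lists (TB \<union> BB)"
    and "regular LA" and "regular LB"
  shows "regular (segre_product TA AA LA TB BB LB)"
proof -
  let ?\<Sigma> = "segre_alphabet TA AA TB BB"
  have "finite (range (\<lambda>w. Derivs w (segre_projA -` LA)))"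
    by (rule finite_range_Derivs_vimage_hom)
      (simp_all add: segre_projA_append finite_range_Derivs_if_regular \<open>regular LA\<close>)
  moreover have "finite (range (\<lambda>w. Derivs w (segre_projB -` LB)))"
    by (rule finite_range_Derivs_vimage_hom)
      (simp_all add: segre_projB_append finite_range_Derivs_if_regular \<open>regular LB\<close>)
  ultimately have "finite (range (\<lambda>w. Derivs w (segre_product TA AA LA TB BB LB)))"
    unfolding segre_product_eq
    by (intro finite_range_Derivs_Int finite_range_Derivs_lists finite_range_Derivs_tau_sorted)
  moreover have "finite ?\<Sigma>"
    using assms by (simp add: finite_segre_alphabet)
  ultimately show ?thesis
    by (intro regular_if_finite_range_Derivs[of ?\<Sigma>]) (auto simp: segre_product_eq)
qed

end
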